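(* Let $E\in M_n(\mathbb{FT})$ be an idempotent of rank $n$ and let $G_E$ be the group of units $G$ of $M_n(\mathbb{T})$ satisfying $G\otimes E=E\otimes G$. Let $I_n$ be the identity of $M_n(\mathbb{T})$, let $R=\{\lambda\otimes I_n:\lambda\in\mathbb{R}\}$ and $\Sigma=\{G\in G_E: G \text{ has eigenvalue } 0\}$. Then $R$ and $\Sigma$ are subgroups of $G_E$, $R\cong\mathbb{R}$, $\Sigma$ is a finite group embeddable in the symmetric group $S_n$, and $G_E$ is the (internal) direct product $R\times\Sigma$.
   Context: $\mathbb{FT}$ is $\mathbb{R}$ with $a\oplus b=\max(a,b)$, $a\otimes b=a+b$; $\mathbb{T}=\mathbb{R}\cup\{-\infty\}$ with the obvious extensions. Matrices multiply by $(A\otimes B)_{i,j}=\bigoplus_k A_{i,k}\otimes B_{k,j}$; $M_n(\mathbb{T})$ is a monoid with identity $I_n$ having $0$ on the diagonal and $-\infty$ elsewhere; its units are the matrices with exactly one entry different from $-\infty$ in each row and column. $\lambda\otimes A$ adds $\lambda$ to each entry. A real number $\lambda$ is an eigenvalue of $G\in M_n(\mathbb{T})$ if $G\otimes x=\lambda\otimes x$ for some $x\in\mathbb{T}^n$ not all of whose entries are $-\infty$. $C(E)$ is the set of finite componentwise maxima of columns of $E$ shifted by real constants; the rank of an idempotent $E$ is the minimal cardinality of a generating set of $C(E)$. *)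

theory Defs
  imports "HOL-Library.Extended_Real" "HOL-Library.Cardinality" "HOL-Algebra.Group" "HOL-Algebra.Bij"
begin

text \<open>The tropical semiring T = R with -infinity is modelled inside ereal: an element of T is
an extended real different from +infinity.  max-plus operations are Max and +.
n x n matrices are indexed by a finite type 'n (n = CARD('n)).\<close>

type_synonym 'n tmat = "'n \<Rightarrow> 'n \<Rightarrow> ereal"
type_synonym 'n tvec = "'n \<Rightarrow> ereal"

definition tmult :: "'n::finite tmat \<Rightarrow> 'n tmat \<Rightarrow> 'n tmat" where
  "tmult A B = (\<lambda>i j. Max ((\<lambda>k. A i k + B k j) ` UNIV))"

definition tmultv :: "'n::finite tmat \<Rightarrow> 'n tvec \<Rightarrow> 'n tvec" where
  "tmultv A x = (\<lambda>i. Max ((\<lambda>k. A i k + x k) ` UNIV))"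

definition tone :: "'n tmat" where
  "tone = (\<lambda>i j. if i = j then 0 else -\<infinity>)"

definition tscal :: "real \<Rightarrow> 'n tmat \<Rightarrow> 'n tmat" where
  "tscal l A = (\<lambda>i j. ereal l + A i j)"

definition tmonoid :: "('n::finite tmat) monoid" where
  "tmonoid = \<lparr>carrier = {A. \<forall>i j. A i j \<noteq> \<infinity>}, mult = tmult, one = tone\<rparr>"

definition finite_tmat :: "'n tmat \<Rightarrow> bool" where
  "finite_tmat A \<longleftrightarrow> (\<forall>i j. \<bar>A i j\<bar> \<noteq> \<infinity>)"

definition trop_eigenvalue :: "'n::finite tmat \<Rightarrow> real \<Rightarrow> bool" where
  "trop_eigenvalue G l \<longleftrightarrow>
     (\<exists>x. (\<forall>i. x i \<noteq> \<infinity>) \<and> (\<exists>i. x i \<noteq> -\<infinity>) \<and>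
          tmultv G x = (\<lambda>i. ereal l + x i))"

definition tspan :: "'n tvec set \<Rightarrow> 'n tvec set" where
  "tspan X = {v. \<exists>S c. S \<subseteq> X \<and> finite S \<and> S \<noteq> {} \<and>
                   v = (\<lambda>i. Max ((\<lambda>x. ereal (c x) + x i) ` S))}"

definition tcolspace :: "'n tmat \<Rightarrow> 'n tvec set" where
  "tcolspace E = tspan ((\<lambda>j. (\<lambda>i. E i j)) ` UNIV)"

definition trop_rank :: "'n tmat \<Rightarrow> nat" where
  "trop_rank E = (LEAST k. \<exists>X. finite X \<and> card X = k \<and> X \<subseteq> tcolspace E \<and>
                              tspan X = tcolspace E)"

definition real_add_group :: "real monoid" where
  "real_add_group = \<lparr>carrier = UNIV, mult = (+), one = 0\<rparr>"

end

theory Submission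
  imports Defs "HOL-Algebra.Elementary_Groups" "HOL-Combinatorics.Cycles"
begin

text \<open>The units of \<open>M\<^sub>n(\<bbbT>)\<close> are the monomial matrices \<open>P\<^sub>p \<otimes> diag d\<close>.  If such a matrix
commutes with a finite \<open>E\<close>, then \<open>E\<^bsub>p c, p b\<^esub> = E\<^bsub>c b\<^esub> + d c - d b\<close>; iterating this along a
period of \<open>p\<close> shows that \<open>d\<close> has the same mean on every cycle of \<open>p\<close>, namely the global mean
\<open>(\<Sum>d)/n\<close>.  Hence \<open>G\<close> has the single eigenvalue \<open>(\<Sum>d)/n\<close>, and \<open>G \<mapsto> \<Sum>d\<close> is a homomorphism
\<open>G\<^sub>E \<rightarrow> (\<real>,+)\<close> with kernel \<open>\<Sigma>\<close>, split by the central section \<open>\<lambda> \<mapsto> \<lambda> \<otimes> I\<^sub>n\<close>; this gives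
\<open>G\<^sub>E = R \<times> \<Sigma>\<close>.  The cocycle relation determines \<open>d\<close> from \<open>p\<close> up to an additive constant, which
the condition \<open>\<Sum>d = 0\<close> fixes, so \<open>G \<mapsto> p\<close> embeds \<open>\<Sigma>\<close> into \<open>S\<^sub>n\<close>.\<close>

section \<open>Centralisers of units and split homomorphisms\<close>

lemma (in monoid) group_commuting_Units:
  assumes a: "a \<in> carrier G"
  shows "group (G\<lparr>carrier := {g \<in> Units G. g \<otimes> a = a \<otimes> g}\<rparr>)"
proof -
  define C where "C = {g \<in> Units G. g \<otimes> a = a \<otimes> g}"
  have carrier: "g \<in> carrier G" if "g \<in> C" for g
    using that by (auto simp: C_def)
  have closed: "g \<otimes> h \<in> C" if g: "g \<in> C" and h: "h \<in> C" for g h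
  proof -
    have "g \<otimes> h \<otimes> a = g \<otimes> (a \<otimes> h)"
      using g h a carrier by (simp add: m_assoc C_def)
    also have "\<dots> = a \<otimes> (g \<otimes> h)"
      using g h a carrier by (simp add: C_def flip: m_assoc)
    finally show ?thesis
      using g h by (simp add: C_def)
  qed
  have inverse: "inv g \<in> C" if g: "g \<in> C" for g
  proof -
    have [simp]: "g \<in> Units G" "g \<in> carrier G" "inv g \<in> carrier G"
      using g by (auto simp: C_def)
    have "inv g \<otimes> a = inv g \<otimes> (a \<otimes> g) \<otimes> inv g"
      using a by (simp add: m_assoc)
    also have "\<dots> = inv g \<otimes> (g \<otimes> a) \<otimes> inv g"
      using g by (simp add: C_def)
    also have "\<dots> = a \<otimes> inv g"
      using a by (simp flip: m_assoc)
    finally show ?thesis by (simp add: C_def)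
  qed
  have "group (G\<lparr>carrier := C\<rparr>)"
    by (rule groupI) (use a carrier closed inverse in \<open>auto simp: m_assoc C_def\<close>)
  then show ?thesis by (simp add: C_def)
qed

lemma group_real_add_group: "group real_add_group"
  by (rule groupI) (auto simp: real_add_group_def intro: exI[of _ "- x" for x])

lemma subgroup_generated_eq_carrier_update:
  assumes "subgroup A G"
  shows "subgroup_generated G A = G\<lparr>carrier := A\<rparr>"
  using subgroup.carrier_subgroup_generated_subgroup[OF assms]
  by (simp add: subgroup_generated_def)

lemma iso_image_of_section:
  assumes w: "group_hom G H w" and s: "\<And>x. x \<in> carrier H \<Longrightarrow> s x \<in> carrier G"
    and left_inverse: "\<And>x. x \<in> carrier H \<Longrightarrow> w (s x) = x"
  shows "w \<in> iso (G\<lparr>carrier := s ` carrier H\<rparr>) H"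
proof -
  interpret w: group_hom G H w by (fact w)
  have "w \<in> hom (G\<lparr>carrier := s ` carrier H\<rparr>) H"
  proof (rule homI)
    fix x y
    assume "x \<in> carrier (G\<lparr>carrier := s ` carrier H\<rparr>)" "y \<in> carrier (G\<lparr>carrier := s ` carrier H\<rparr>)"
    then show "w (x \<otimes>\<^bsub>G\<lparr>carrier := s ` carrier H\<rparr>\<^esub> y) = w x \<otimes>\<^bsub>H\<^esub> w y"
      using s by (auto intro: w.hom_mult)
  qed (use s in auto)
  moreover have "bij_betw w (s ` carrier H) (carrier H)"
  proof (rule bij_betw_imageI)
    show "inj_on w (s ` carrier H)"
      by (rule inj_onI) (metis imageE left_inverse)
    show "w ` s ` carrier H = carrier H"
      using left_inverse by (force simp: image_image)
  qed
  ultimately show ?thesis by (simp add: iso_def)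
qed

lemma iso_mult_image_of_section_kernel:
  fixes G (structure)
  assumes w: "group_hom G H w" and s: "group_hom H G s"
    and left_inverse: "\<And>x. x \<in> carrier H \<Longrightarrow> w (s x) = x"
    and central: "\<And>x g. x \<in> carrier H \<Longrightarrow> g \<in> carrier G \<Longrightarrow> s x \<otimes> g = g \<otimes> s x"
  shows "(\<lambda>(x, y). x \<otimes> y)
           \<in> iso (G\<lparr>carrier := s ` carrier H\<rparr> \<times>\<times> G\<lparr>carrier := kernel G H w\<rparr>) G"
proof -
  interpret w: group_hom G H w by (fact w)
  interpret s: group_hom H G s by (fact s)
  have disjoint: "s ` carrier H \<inter> kernel G H w = {\<one>}"
  proof
    show "s ` carrier H \<inter> kernel G H w \<subseteq> {\<one>}"
    proof
      fix g assume g: "g \<in> s ` carrier H \<inter> kernel G H w"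
      then obtain x where x: "x \<in> carrier H" "g = s x" by blast
      have "w g = \<one>\<^bsub>H\<^esub>" using g unfolding kernel_def by blast
      then have "x = \<one>\<^bsub>H\<^esub>" using left_inverse[OF x(1)] unfolding x(2) by argo
      then show "g \<in> {\<one>}" using x(2) s.hom_one by blast
    qed
    have "\<one> \<in> s ` carrier H"
      using s.hom_one w.H.one_closed by (metis image_eqI)
    then show "{\<one>} \<subseteq> s ` carrier H \<inter> kernel G H w"
      unfolding kernel_def by auto
  qed
  have cover: "s ` carrier H <#> kernel G H w = carrier G"
  proof
    show "s ` carrier H <#> kernel G H w \<subseteq> carrier G"
      by (auto simp: set_mult_def kernel_def)
    show "carrier G \<subseteq> s ` carrier H <#> kernel G H w"
    proof
      fix g assume g: "g \<in> carrier G"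
      let ?r = "s (w g)"
      have r: "?r \<in> carrier G" using g by simp
      have "inv ?r \<otimes> g \<in> kernel G H w"
        using g r left_inverse[of "w g"] by (simp add: kernel_def w.hom_mult w.hom_inv)
      moreover have "?r \<in> s ` carrier H"
        using g by simp
      ultimately have "?r \<otimes> (inv ?r \<otimes> g) \<in> s ` carrier H <#> kernel G H w"
        unfolding set_mult_def by blast
      moreover have "?r \<otimes> (inv ?r \<otimes> g) = g"
        using g r by (simp flip: w.G.m_assoc)
      ultimately show "g \<in> s ` carrier H <#> kernel G H w"
        by simp
    qed
  qed
  have "\<forall>x\<in>s ` carrier H. \<forall>y\<in>kernel G H w. x \<otimes> y = y \<otimes> x"
    using central by (auto simp: kernel_def)
  moreover have "group_disjoint_sum G (s ` carrier H) (kernel G H w)"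
    using s.img_is_subgroup w.subgroup_kernel
    by (simp add: group_disjoint_sum_def w.G.group_axioms)
  ultimately have "(\<lambda>(x, y). x \<otimes> y) \<in> iso (subgroup_generated G (s ` carrier H) \<times>\<times>
      subgroup_generated G (kernel G H w)) G"
    using group_disjoint_sum.iso_group_mul_alt disjoint cover by blast
  then show ?thesis
    by (simp add: subgroup_generated_eq_carrier_update[OF s.img_is_subgroup]
        subgroup_generated_eq_carrier_update[OF w.subgroup_kernel])
qed

section \<open>The monoid of tropical matrices\<close>

lemma Max_range_eq_single:
  fixes f :: "'a::finite \<Rightarrow> ereal"
  assumes "\<And>k. k \<noteq> k' \<Longrightarrow> f k = -\<infinity>"
  shows "Max (range f) = f k'"
proof (rule Max_eqI)
  fix y assume "y \<in> range f"
  then obtain k where "y = f k" by auto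
  then show "y \<le> f k'" using assms by (cases "k = k'") auto
qed auto

lemma Max_range_swap:
  fixes F :: "'a::finite \<Rightarrow> 'b::finite \<Rightarrow> 'c::linorder"
  shows "Max (range (\<lambda>k. Max (range (F k)))) = Max (range (\<lambda>l. Max (range (\<lambda>k. F k l))))"
    (is "?L = ?R")
proof (rule order.antisym)
  have "F k l \<le> Max (range (\<lambda>k. F k l))" "Max (range (\<lambda>k. F k l)) \<le> ?R" for k l
    by (rule Max_ge; simp)+
  then have "F k l \<le> ?R" for k l
    using order_trans by blast
  then show "?L \<le> ?R"
    by (simp add: Max_le_iff)
next
  have "F k l \<le> Max (range (F k))" "Max (range (F k)) \<le> ?L" for k l
    by (rule Max_ge; simp)+
  then have "F k l \<le> ?L" for k l
    using order_trans by blast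
  then show "?R \<le> ?L"
    by (simp add: Max_le_iff)
qed

lemma ereal_Max_add:
  fixes c :: ereal
  shows "finite A \<Longrightarrow> A \<noteq> {} \<Longrightarrow> Max A + c = Max ((\<lambda>x. x + c) ` A)"
  by (rule mono_Max_commute) (auto intro: monoI add_right_mono)

lemma ereal_add_Max:
  fixes c :: ereal
  shows "finite A \<Longrightarrow> A \<noteq> {} \<Longrightarrow> c + Max A = Max ((+) c ` A)"
  by (rule mono_Max_commute) (auto intro: monoI add_left_mono)

lemma tmult_assoc: "tmult (tmult A B) C = tmult A (tmult B (C :: 'n::finite tmat))"
proof (intro ext)
  fix i j
  have "tmult (tmult A B) C i j = Max (range (\<lambda>k. Max (range (\<lambda>l. A i l + B l k + C k j))))"
    unfolding tmult_def by (subst ereal_Max_add) (auto simp: image_image)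
  also have "\<dots> = Max (range (\<lambda>l. Max (range (\<lambda>k. A i l + B l k + C k j))))"
    by (rule Max_range_swap)
  also have "\<dots> = tmult A (tmult B C) i j"
    by (simp add: tmult_def ereal_add_Max image_image add.assoc)
  finally show "tmult (tmult A B) C i j = tmult A (tmult B C) i j" .
qed

lemma le_tmult: "A i k + B k j \<le> tmult A B i (j::'n::finite)"
  unfolding tmult_def by (rule Max_ge) auto

lemma tmult_attained: "\<exists>k. tmult A B i j = A i k + B k (j::'n::finite)"
proof -
  have "tmult A B i j \<in> range (\<lambda>k. A i k + B k j)"
    unfolding tmult_def by (rule Max_in) auto
  then show ?thesis by auto
qed

lemma tmult_neq_infty:
  assumes "\<forall>i j. A i j \<noteq> \<infinity>" "\<forall>i j. B i j \<noteq> \<infinity>"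
  shows "tmult A B i (j::'n::finite) \<noteq> \<infinity>"
  using tmult_attained[of A B i j] assms by auto

definition tmonom :: "('n \<Rightarrow> 'n) \<Rightarrow> ('n \<Rightarrow> real) \<Rightarrow> 'n tmat" where
  "tmonom p d = (\<lambda>a b. if a = p b then ereal (d b) else -\<infinity>)"

lemma tmult_tmonom_right:
  assumes "\<forall>i j. A i j \<noteq> \<infinity>"
  shows "tmult A (tmonom p d) a b = A a (p b) + ereal (d b)"
  unfolding tmult_def using assms
  by (subst Max_range_eq_single[where k' = "p b"]) (auto simp: tmonom_def)

lemma tmult_tmonom_left:
  assumes "\<forall>i j. A i j \<noteq> \<infinity>" "inj p"
  shows "tmult (tmonom p d) A (p c) b = ereal (d c) + A c b"
  unfolding tmult_def using assms
  by (subst Max_range_eq_single[where k' = c]) (auto simp: tmonom_def inj_eq)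

lemma tmonom_mult: "tmult (tmonom p d) (tmonom q e) = tmonom (p \<circ> q) (\<lambda>b. d (q b) + e b)"
  by (intro ext) (subst tmult_tmonom_right; auto simp: tmonom_def)

lemma tone_eq_tmonom: "tone = tmonom id (\<lambda>_. 0)"
  by (intro ext) (simp add: tone_def tmonom_def zero_ereal_def)

lemma tscal_tone_eq_tmonom: "tscal l tone = tmonom id (\<lambda>_. l)"
  by (intro ext) (auto simp: tscal_def tone_def tmonom_def)

lemma tone_tmult: "\<forall>i j. A i j \<noteq> \<infinity> \<Longrightarrow> tmult tone A = (A :: 'n::finite tmat)"
  using tmult_tmonom_left[of A id "\<lambda>_. 0"] by (intro ext) (simp add: tone_eq_tmonom)

lemma tmult_tone: "\<forall>i j. A i j \<noteq> \<infinity> \<Longrightarrow> tmult A tone = (A :: 'n::finite tmat)"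
  by (intro ext) (simp add: tone_eq_tmonom tmult_tmonom_right zero_ereal_def[symmetric])

lemma carrier_tmonoid [simp]: "carrier tmonoid = {A. \<forall>i j. A i j \<noteq> \<infinity>}"
  and mult_tmonoid [simp]: "monoid.mult tmonoid = tmult"
  and one_tmonoid [simp]: "\<one>\<^bsub>tmonoid\<^esub> = tone"
  by (simp_all add: tmonoid_def)

lemma tone_neq_infty: "tone i j \<noteq> \<infinity>"
  by (simp add: tone_def)

lemma finite_tmat_in_carrier: "finite_tmat E \<Longrightarrow> E \<in> carrier tmonoid"
  by (auto simp: finite_tmat_def) (metis abs_ereal.simps(3))

lemma monoid_tmonoid: "monoid (tmonoid :: 'n::finite tmat monoid)"
  by (rule monoidI) (auto simp: tmult_neq_infty tmult_assoc tone_tmult tmult_tone tone_neq_infty)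

lemma tmonom_neq_infty: "tmonom p d i j \<noteq> \<infinity>"
  by (simp add: tmonom_def)

lemma tmonom_in_Units:
  fixes p :: "'n::finite \<Rightarrow> 'n"
  assumes "bij p"
  shows "tmonom p d \<in> Units tmonoid"
proof -
  let ?q = "inv_into UNIV p"
  define Q where "Q = tmonom ?q (\<lambda>b. - d (?q b))"
  have "tmult (tmonom p d) Q = tone"
    using surj_iff[THEN iffD1, OF bij_is_surj[OF assms]]
    by (simp add: Q_def tmonom_mult tone_eq_tmonom)
  moreover have "tmult Q (tmonom p d) = tone"
    using inj_iff[THEN iffD1, OF bij_is_inj[OF assms]]
    by (simp add: Q_def tmonom_mult tone_eq_tmonom inv_f_f[OF bij_is_inj[OF assms]])
  ultimately show ?thesis
    by (auto simp: Units_def tmonom_neq_infty Q_def intro!: exI[of _ Q])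
qed

lemma Units_tmonoidE:
  fixes G :: "'n::finite tmat"
  assumes "G \<in> Units tmonoid"
  obtains p d where "bij p" "G = tmonom p d"
proof -
  from assms obtain H where GC: "\<forall>i j. G i j \<noteq> \<infinity>" and HC: "\<forall>i j. H i j \<noteq> \<infinity>"
    and HG: "tmult H G = tone" and GH: "tmult G H = tone"
    by (auto simp: Units_def)
  have "\<exists>k. H i k \<noteq> -\<infinity> \<and> G k i \<noteq> -\<infinity>" for i
  proof -
    obtain k where "H i k + G k i = 0"
      using tmult_attained[of H G i i] HG by (auto simp: tone_def)
    then show ?thesis
      using GC HC by (intro exI[of _ k]) (cases "G k i"; cases "H i k"; auto)
  qed
  then obtain g where g: "\<And>i. H i (g i) \<noteq> -\<infinity> \<and> G (g i) i \<noteq> -\<infinity>" by metis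
  text \<open>Off-diagonal entries of \<open>H \<otimes> G\<close> and \<open>G \<otimes> H\<close> are \<open>-\<infinity>\<close>, so each \<open>g i\<close> is the only
    finite position of column \<open>i\<close> of \<open>G\<close>, and no other row of \<open>H\<close> is finite in column \<open>g i\<close>.\<close>
  have H_minf: "H j (g i) = -\<infinity>" if "j \<noteq> i" for i j
    using le_tmult[of H j "g i" G i] HG that g[of i] GC HC by (auto simp: tone_def)
  have G_minf: "G a i = -\<infinity>" if "a \<noteq> g i" for a i
    using le_tmult[of G a i H "g i"] GH that g[of i] GC HC by (auto simp: tone_def)
  have "inj g"
    by (rule injI) (metis H_minf g)
  then have "bij g" by (simp add: bij_def finite_UNIV_inj_surj)
  moreover have "G = tmonom g (\<lambda>i. real_of_ereal (G (g i) i))"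
  proof (intro ext)
    fix a i show "G a i = tmonom g (\<lambda>i. real_of_ereal (G (g i) i)) a i"
      using G_minf[of a i] g[of i] GC by (cases "G (g i) i") (auto simp: tmonom_def)
  qed
  ultimately show ?thesis by (rule that)
qed

lemma tmonom_commute_cocycle:
  assumes "finite_tmat E" "bij p" "tmult (tmonom p d) E = tmult E (tmonom p d)"
  shows "real_of_ereal (E (p c) (p b)) = real_of_ereal (E c b) + d c - d b"
proof -
  have EC: "\<forall>i j. E i j \<noteq> \<infinity>"
    using finite_tmat_in_carrier[OF assms(1)] by simp
  have E_real: "E i j = ereal (real_of_ereal (E i j))" for i j
    using assms(1) by (simp add: finite_tmat_def ereal_real)
  have "ereal (d c) + E c b = E (p c) (p b) + ereal (d b)"
    using tmult_tmonom_left[OF EC bij_is_inj[OF assms(2)], of d c b]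
      tmult_tmonom_right[OF EC, of p d "p c" b] assms(3) by simp
  then show ?thesis
    by (subst (asm) (1 2) E_real) simp
qed

section \<open>Eigenvalues of monomial matrices\<close>

definition orbit_sum :: "('n \<Rightarrow> 'n) \<Rightarrow> ('n \<Rightarrow> real) \<Rightarrow> 'n \<Rightarrow> nat \<Rightarrow> real" where
  "orbit_sum p d x t = (\<Sum>s<t. d ((p ^^ s) x))"

lemma orbit_sum_0 [simp]: "orbit_sum p d x 0 = 0"
  by (simp add: orbit_sum_def)

lemma orbit_sum_Suc: "orbit_sum p d x (Suc t) = orbit_sum p d x t + d ((p ^^ t) x)"
  by (simp add: orbit_sum_def)

lemma orbit_sum_shift: "orbit_sum p d (p x) t = orbit_sum p d x (Suc t) - d x"
  unfolding orbit_sum_def sum.lessThan_Suc_shift by (simp add: funpow_swap1)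

lemma cocycle_funpow:
  assumes "\<And>b c. e (p c) (p b) = e c b + d c - d b"
  shows "e ((p ^^ t) c) ((p ^^ t) b) = e c b + orbit_sum p d c t - orbit_sum p d b t"
  by (induction t) (simp_all add: orbit_sum_Suc assms)

lemma orbit_sum_period:
  fixes p :: "'n::finite \<Rightarrow> 'n"
  assumes "bij p" and cocycle: "\<And>b c. e (p c) (p b) = e c b + d c - d b" and "p ^^ K = id"
  shows "orbit_sum p d b K = real K * (\<Sum>x\<in>UNIV. d x) / real CARD('n)"
proof -
  have orbit_sum_const: "orbit_sum p d c K = orbit_sum p d b K" for c
    using cocycle_funpow[of e p d K c b, OF cocycle] assms(3) by simp
  have "real CARD('n) * orbit_sum p d b K = (\<Sum>c\<in>(UNIV :: 'n set). orbit_sum p d b K)"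
    by simp
  also have "\<dots> = (\<Sum>c\<in>UNIV. orbit_sum p d c K)"
    by (rule sum.cong[OF refl orbit_sum_const[symmetric]])
  also have "\<dots> = (\<Sum>s<K. \<Sum>c\<in>UNIV. d ((p ^^ s) c))"
    unfolding orbit_sum_def by (rule sum.swap)
  also have "\<dots> = real K * (\<Sum>x\<in>UNIV. d x)"
    using sum.reindex_bij_betw[OF bij_betw_funpow[OF assms(1)], of d]
    by simp
  finally show ?thesis by (simp add: field_simps)
qed

lemma tmultv_tmonom:
  assumes "bij p" "\<forall>i. x i \<noteq> \<infinity>"
  shows "tmultv (tmonom p d) x (p b) = ereal (d b) + x (b::'n::finite)"
  unfolding tmultv_def using assms
  by (subst Max_range_eq_single[where k' = b]) (auto simp: tmonom_def bij_is_inj inj_eq)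

lemma trop_eigenvalue_tmonomI:
  fixes p :: "'n::finite \<Rightarrow> 'n"
  assumes "bij p" "K > 0" "\<And>b. orbit_sum p d b K = real K * \<mu>"
  shows "trop_eigenvalue (tmonom p d) \<mu>"
proof -
  text \<open>The eigenvector is minus the mean of the partial orbit sums; telescoping gives
    \<open>d b + x b = \<mu> + x (p b)\<close>.\<close>
  define S where "S b = (\<Sum>t<K. orbit_sum p d b t)" for b
  define x where "x b = ereal (- S b / real K)" for b
  have "S (p b) = (\<Sum>t<K. orbit_sum p d b (Suc t) - orbit_sum p d b t) + S b - real K * d b" for b
    unfolding S_def orbit_sum_shift by (simp add: sum_subtractf)
  then have S_shift: "S (p b) = S b + real K * \<mu> - real K * d b" for b
    using assms(3) by (simp add: sum_lessThan_telescope)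
  have "ereal (d b) + x b = ereal \<mu> + x (p b)" for b
    using assms(2) unfolding x_def S_shift by (simp add: field_simps)
  then have "tmultv (tmonom p d) x (p b) = ereal \<mu> + x (p b)" for b
    using tmultv_tmonom[OF assms(1)] by (simp add: x_def)
  then have "tmultv (tmonom p d) x = (\<lambda>i. ereal \<mu> + x i)"
    using assms(1) by (metis bij_pointE)
  then show ?thesis unfolding trop_eigenvalue_def
    by (intro exI[of _ x]) (auto simp: x_def)
qed

lemma trop_eigenvalue_tmonomD:
  fixes p :: "'n::finite \<Rightarrow> 'n"
  assumes "bij p" "p ^^ K = id" "trop_eigenvalue (tmonom p d) \<mu>"
  obtains b where "orbit_sum p d b K = real K * \<mu>"
proof -
  obtain x b where x_fin: "\<forall>i. x i \<noteq> \<infinity>" and b: "x b \<noteq> -\<infinity>"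
    and ev: "tmultv (tmonom p d) x = (\<lambda>i. ereal \<mu> + x i)"
    using assms(3) unfolding trop_eigenvalue_def by blast
  have step: "ereal (d c) + x c = ereal \<mu> + x (p c)" for c
    using tmultv_tmonom[OF assms(1) x_fin, of d c] ev by metis
  have orbit_real: "x ((p ^^ s) b) \<noteq> -\<infinity>" for s
  proof (induction s)
    case (Suc s)
    then show ?case
      using step[of "(p ^^ s) b"] x_fin by (cases "x ((p ^^ s) b)") auto
  qed (use b in simp)
  define y where "y s = real_of_ereal (x ((p ^^ s) b))" for s
  have xy: "x ((p ^^ s) b) = ereal (y s)" for s
    using orbit_real[of s] x_fin unfolding y_def by (cases "x ((p ^^ s) b)") auto
  have "d ((p ^^ s) b) = \<mu> + (y (Suc s) - y s)" for s
    using step[of "(p ^^ s) b"] xy[of s] xy[of "Suc s"] by simp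
  then have "orbit_sum p d b K = real K * \<mu> + (y K - y 0)"
    by (simp add: orbit_sum_def sum.distrib sum_lessThan_telescope)
  also have "y K = y 0" unfolding y_def using assms(2) by simp
  finally show ?thesis by (intro that) simp
qed

lemma trop_eigenvalue_tmonom_iff:
  fixes p :: "'n::finite \<Rightarrow> 'n"
  assumes "bij p" and cocycle: "\<And>b c. e (p c) (p b) = e c b + d c - d b"
  shows "trop_eigenvalue (tmonom p d) \<mu> \<longleftrightarrow> real CARD('n) * \<mu> = (\<Sum>x\<in>UNIV. d x)"
proof -
  have "permutation p"
    using assms(1) by (auto simp: permutation_permutes intro: bij_imp_permutes)
  then obtain K where K: "p ^^ K = id" "K > 0" by (rule permutation_is_nilpotent)
  note period = orbit_sum_period[of p e d K, OF assms(1) cocycle K(1)]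
  show ?thesis
  proof
    assume "trop_eigenvalue (tmonom p d) \<mu>"
    then obtain b where "orbit_sum p d b K = real K * \<mu>"
      by (rule trop_eigenvalue_tmonomD[OF assms(1) K(1)])
    then show "real CARD('n) * \<mu> = (\<Sum>x\<in>UNIV. d x)"
      using K(2) period by (simp add: field_simps)
  next
    assume mean: "real CARD('n) * \<mu> = (\<Sum>x\<in>UNIV. d x)"
    show "trop_eigenvalue (tmonom p d) \<mu>"
      using period by (intro trop_eigenvalue_tmonomI[OF assms(1) K(2)]) (simp add: mean[symmetric])
  qed
qed

section \<open>The group \<open>G\<^sub>E\<close>\<close>

definition unit_centralizer :: "'n::finite tmat \<Rightarrow> 'n tmat set" where
  "unit_centralizer E = {G \<in> Units tmonoid. tmult G E = tmult E G}"

text \<open>On monomial matrices this is the tropical determinant.\<close>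
definition tweight :: "'n::finite tmat \<Rightarrow> real" where
  "tweight G = (\<Sum>b\<in>UNIV. real_of_ereal (Max (range (\<lambda>a. G a b))))"

definition tperm :: "'n tmat \<Rightarrow> 'n \<Rightarrow> 'n" where
  "tperm G = (\<lambda>b. THE a. G a b \<noteq> -\<infinity>)"

lemma tweight_tmonom: "tweight (tmonom p d) = (\<Sum>b\<in>UNIV. d b)"
proof -
  have "Max (range (\<lambda>a. tmonom p d a b)) = ereal (d b)" for b
    by (subst Max_range_eq_single[where k' = "p b"]) (auto simp: tmonom_def)
  then show ?thesis by (simp add: tweight_def)
qed

lemma tperm_tmonom: "tperm (tmonom p d) = p"
  by (auto simp: tperm_def tmonom_def)

lemma tweight_tmult:
  assumes "G \<in> Units tmonoid" "H \<in> Units (tmonoid :: 'n::finite tmat monoid)"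
  shows "tweight (tmult G H) = tweight G + tweight H"
proof -
  obtain p d where "G = tmonom p d"
    using assms(1) by (rule Units_tmonoidE)
  moreover obtain q e where "bij q" "H = tmonom q e"
    using assms(2) by (rule Units_tmonoidE)
  moreover have "(\<Sum>b\<in>UNIV. d (q b)) = (\<Sum>b\<in>UNIV. d b)"
    by (rule sum.reindex_bij_betw) (use \<open>bij q\<close> in \<open>simp add: bij_betw_def bij_def\<close>)
  ultimately show ?thesis by (simp add: tmonom_mult tweight_tmonom sum.distrib)
qed

lemma tperm_tmult:
  assumes "G \<in> Units tmonoid" "H \<in> Units (tmonoid :: 'n::finite tmat monoid)"
  shows "tperm (tmult G H) = tperm G \<circ> tperm H"
proof -
  obtain p d where "G = tmonom p d"
    using assms(1) by (rule Units_tmonoidE)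
  moreover obtain q e where "H = tmonom q e"
    using assms(2) by (rule Units_tmonoidE)
  ultimately show ?thesis by (simp add: tmonom_mult tperm_tmonom)
qed

lemma bij_tperm:
  assumes "G \<in> Units (tmonoid :: 'n::finite tmat monoid)"
  shows "bij (tperm G)"
proof -
  obtain p d where "bij p" "G = tmonom p d"
    using assms by (rule Units_tmonoidE)
  then show ?thesis by (simp add: tperm_tmonom)
qed

lemma tperm_hom_BijGroup:
  assumes "S \<subseteq> Units (tmonoid :: 'n::finite tmat monoid)"
  shows "tperm \<in> hom (tmonoid\<lparr>carrier := S\<rparr>) (BijGroup UNIV)"
proof (rule homI)
  fix G assume "G \<in> carrier (tmonoid\<lparr>carrier := S\<rparr>)"
  then show "tperm G \<in> carrier (BijGroup UNIV)"
    using assms bij_tperm by (auto simp: BijGroup_def Bij_def)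
next
  fix G H
  assume "G \<in> carrier (tmonoid\<lparr>carrier := S\<rparr>)" "H \<in> carrier (tmonoid\<lparr>carrier := S\<rparr>)"
  then have "G \<in> Units tmonoid" "H \<in> Units tmonoid" using assms by auto
  then show "tperm (G \<otimes>\<^bsub>tmonoid\<lparr>carrier := S\<rparr>\<^esub> H) = tperm G \<otimes>\<^bsub>BijGroup UNIV\<^esub> tperm H"
    using bij_tperm[of G] bij_tperm[of H]
    by (simp add: tperm_tmult BijGroup_def Bij_def compose_def restrict_def o_def)
qed

lemma tscal_tone_mult: "tmult (tscal l tone) (tscal m tone) = tscal (l + m) tone"
  by (simp add: tscal_tone_eq_tmonom tmonom_mult)

lemma tweight_tscal_tone: "tweight (tscal l (tone :: 'n::finite tmat)) = real CARD('n) * l"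
  by (simp add: tscal_tone_eq_tmonom tweight_tmonom)

lemma tscal_tone_central:
  assumes "A \<in> carrier tmonoid"
  shows "tmult (tscal l tone) A = tmult A (tscal l (tone :: 'n::finite tmat))"
proof (intro ext)
  fix a b
  have A: "\<forall>i j. A i j \<noteq> \<infinity>" using assms by simp
  have "tmult (tscal l tone) A a b = ereal l + A a b"
    using tmult_tmonom_left[OF A inj_on_id, of "\<lambda>_. l" a b] by (simp add: tscal_tone_eq_tmonom)
  also have "\<dots> = tmult A (tscal l tone) a b"
    using tmult_tmonom_right[OF A, of id "\<lambda>_. l" a b] by (simp add: tscal_tone_eq_tmonom add.commute)
  finally show "tmult (tscal l tone) A a b = tmult A (tscal l tone) a b" .
qed

lemma tscal_tone_in_unit_centralizer:
  "finite_tmat E \<Longrightarrow> tscal l tone \<in> unit_centralizer (E :: 'n::finite tmat)"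
  using tscal_tone_central[OF finite_tmat_in_carrier, of E l] tmonom_in_Units[of id]
  by (simp add: unit_centralizer_def tscal_tone_eq_tmonom)

lemma group_unit_centralizer:
  assumes "finite_tmat E"
  shows "group (tmonoid\<lparr>carrier := unit_centralizer (E :: 'n::finite tmat)\<rparr>)"
  using monoid.group_commuting_Units[OF monoid_tmonoid finite_tmat_in_carrier[OF assms]]
  by (simp add: unit_centralizer_def)

lemma group_hom_tweight:
  assumes "finite_tmat E"
  shows "group_hom (tmonoid\<lparr>carrier := unit_centralizer (E :: 'n::finite tmat)\<rparr>)
           real_add_group tweight"
  using group_unit_centralizer[OF assms] group_real_add_group
  by (auto simp: group_hom_def group_hom_axioms_def real_add_group_def unit_centralizer_def
      tweight_tmult intro!: homI)

lemma group_hom_tscal_tone: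
  assumes "finite_tmat E"
  shows "group_hom real_add_group (tmonoid\<lparr>carrier := unit_centralizer (E :: 'n::finite tmat)\<rparr>)
           (\<lambda>l. tscal (l / c) tone)"
  using group_unit_centralizer[OF assms] group_real_add_group tscal_tone_in_unit_centralizer[OF assms]
  by (auto simp: group_hom_def group_hom_axioms_def real_add_group_def tscal_tone_mult
      add_divide_distrib intro!: homI)

lemma range_tscal_tone_divide:
  assumes "c \<noteq> 0"
  shows "range (\<lambda>l. tscal (l / c) tone) = {tscal l tone | l. True}"
proof -
  have "tscal l tone \<in> range (\<lambda>l. tscal (l / c) tone)" for l
    using assms by (intro image_eqI[of _ _ "c * l"]) simp_all
  then show ?thesis by auto
qed

lemma trop_eigenvalue_unit_centralizer_iff:
  assumes "finite_tmat E" "G \<in> unit_centralizer (E :: 'n::finite tmat)"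
  shows "trop_eigenvalue G \<mu> \<longleftrightarrow> real CARD('n) * \<mu> = tweight G"
proof -
  obtain p d where p: "bij p" "G = tmonom p d"
    using assms(2) unfolding unit_centralizer_def by (blast elim: Units_tmonoidE)
  then have "\<And>b c. real_of_ereal (E (p c) (p b)) = real_of_ereal (E c b) + d c - d b"
    using tmonom_commute_cocycle[OF assms(1)] assms(2) by (simp add: unit_centralizer_def)
  then show ?thesis
    using trop_eigenvalue_tmonom_iff[of p "\<lambda>i j. real_of_ereal (E i j)" d \<mu>] p
    by (simp add: tweight_tmonom)
qed

lemma kernel_tweight_unit_centralizer:
  assumes "finite_tmat E"
  shows "kernel (tmonoid\<lparr>carrier := unit_centralizer E\<rparr>) real_add_group tweight
           = {G \<in> unit_centralizer (E :: 'n::finite tmat). trop_eigenvalue G 0}"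
  using trop_eigenvalue_unit_centralizer_iff[OF assms] by (auto simp: kernel_def real_add_group_def)

lemma inj_on_tperm_weight_zero:
  assumes "finite_tmat E"
  shows "inj_on tperm {G \<in> unit_centralizer (E :: 'n::finite tmat). tweight G = 0}"
proof
  fix G G' assume G: "G \<in> {G \<in> unit_centralizer E. tweight G = 0}"
    and G': "G' \<in> {G \<in> unit_centralizer E. tweight G = 0}" and same_perm: "tperm G = tperm G'"
  obtain p d p' d' where p: "bij p" "G = tmonom p d" and p': "bij p'" "G' = tmonom p' d'"
    using G G' unfolding unit_centralizer_def by (blast elim: Units_tmonoidE)
  have "p' = p" using same_perm p p' by (simp add: tperm_tmonom)
  with G G' p p' have cocycles: "real_of_ereal (E (p c) (p b)) = real_of_ereal (E c b) + d c - d b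
      \<and> real_of_ereal (E (p c) (p b)) = real_of_ereal (E c b) + d' c - d' b" for b c
    using tmonom_commute_cocycle[OF assms] by (auto simp: unit_centralizer_def)
  define \<kappa> where "\<kappa> = d undefined - d' undefined"
  have d_shift: "d = (\<lambda>c. d' c + \<kappa>)"
  proof
    fix c show "d c = d' c + \<kappa>"
      using cocycles[of undefined c] unfolding \<kappa>_def by linarith
  qed
  have "(\<Sum>c\<in>UNIV. d c) = (\<Sum>c\<in>UNIV. d' c) + real CARD('n) * \<kappa>"
    by (simp add: d_shift sum.distrib)
  moreover have "(\<Sum>c\<in>UNIV. d c) = 0" "(\<Sum>c\<in>UNIV. d' c) = 0"
    using G G' p p' by (simp_all add: tweight_tmonom)
  ultimately have "d = d'"
    by (simp add: d_shift)
  then show "G = G'" using p p' \<open>p' = p\<close> by simp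
qed

theorem theorem7p8:
  fixes E :: "'n::finite tmat"
    and GE R Sigma :: "'n tmat set"
  assumes "finite_tmat E"
    and "tmult E E = E"
    and "trop_rank E = CARD('n)"
    and "GE = {G \<in> Units tmonoid. tmult G E = tmult E G}"
    and "R = {tscal l tone | l. True}"
    and "Sigma = {G \<in> GE. trop_eigenvalue G 0}"
  shows "group (tmonoid\<lparr>carrier := GE\<rparr>)
    \<and> subgroup R (tmonoid\<lparr>carrier := GE\<rparr>)
    \<and> subgroup Sigma (tmonoid\<lparr>carrier := GE\<rparr>)
    \<and> tmonoid\<lparr>carrier := R\<rparr> \<cong> real_add_group
    \<and> finite Sigma
    \<and> (\<exists>h. h \<in> hom (tmonoid\<lparr>carrier := Sigma\<rparr>) (BijGroup (UNIV :: 'n set)) \<and> inj_on h Sigma)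
    \<and> (\<lambda>(r, s). tmult r s) \<in> iso (tmonoid\<lparr>carrier := R\<rparr> \<times>\<times> tmonoid\<lparr>carrier := Sigma\<rparr>)
                                   (tmonoid\<lparr>carrier := GE\<rparr>)"
proof -
  let ?\<Gamma> = "tmonoid\<lparr>carrier := GE\<rparr>"
  let ?s = "\<lambda>l. tscal (l / real CARD('n)) (tone :: 'n tmat)"
  have GE: "GE = unit_centralizer E"
    using assms(4) by (simp add: unit_centralizer_def)
  interpret w: group_hom ?\<Gamma> real_add_group tweight
    using group_hom_tweight[OF assms(1)] GE by simp
  interpret s: group_hom real_add_group ?\<Gamma> ?s
    using group_hom_tscal_tone[OF assms(1)] GE by simp
  have left_inverse: "tweight (?s l) = l" for l
    by (simp add: tweight_tscal_tone)
  have central: "tmult (?s l) G = tmult G (?s l)" if "G \<in> GE" for l G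
    using that GE by (intro tscal_tone_central) (auto simp: unit_centralizer_def Units_def)
  have R: "R = ?s ` carrier real_add_group"
    using assms(5) by (simp add: real_add_group_def range_tscal_tone_divide)
  have Sigma: "Sigma = kernel ?\<Gamma> real_add_group tweight"
    using assms(6) kernel_tweight_unit_centralizer[OF assms(1)] GE by simp
  have "Sigma \<subseteq> Units tmonoid" "inj_on tperm Sigma"
    using Sigma GE inj_on_tperm_weight_zero[OF assms(1)]
    by (auto simp: kernel_def real_add_group_def unit_centralizer_def)
  then show ?thesis
    using w.G.is_group s.img_is_subgroup w.subgroup_kernel R Sigma
      iso_image_of_section[of _ _ _ ?s, OF w.group_hom_axioms s.hom_closed left_inverse]
      tperm_hom_BijGroup finite_imageD[of tperm Sigma]
      iso_mult_image_of_section_kernel[OF w.group_hom_axioms s.group_hom_axioms] central left_inverse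
    by (auto simp: is_iso_def)
qed

end
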